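(* On the noncommutative space $\mathbb{R}^4_\theta$ described in the context, let $f=\tfrac12(\sum_{i,j}g_{ij}z^iz^j-1)=\tfrac12(z^1z^3+z^2z^4-1)$ (a central element of $A$) and $B=A/(f)$ (the Connes–Landi sphere $\mathbb{S}^3_\theta$). Then the $1$-form $\nu:=\mathrm{d}f=\sum_{i,j=1}^4g_{ij}\,z^i\,\mathrm{d}z^j\in\Omega^1_A$ is central and satisfies $[g^{-1}(\nu\otimes_A\nu)]=1$ in $B$; hence $B$ is a noncommutative hypersurface of $A$ with $N^1_B$ having basis $[\nu]$. Moreover, the projector $\Pi:q_!(\Omega^1_A)\to q_!(\Omega^1_A)$, $[\omega]\mapsto[\omega-g^{-1}(\omega\otimes_A\nu)\nu]$, is given by $\Pi(\mathrm{d}z^i)=\mathrm{d}z^i-z^i\,\nu$ (as classes in $q_!(\Omega^1_A)$).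
   Context: Let $\theta\in\mathbb{R}$, $R=(R^{ab})$ the $4\times4$ matrix (row $a$, column $b$) with rows $(1,e^{-i\theta},1,e^{i\theta})$, $(e^{i\theta},1,e^{-i\theta},1)$, $(1,e^{i\theta},1,e^{-i\theta})$, $(e^{-i\theta},1,e^{i\theta},1)$; $A=\mathbb{C}\langle z^1,\dots,z^4\rangle/(z^iz^j-R^{ji}z^jz^i)$; $\Omega^1_A=\bigoplus_iA\,\mathrm{d}z^i$ free left module with $\mathrm{d}z^i\,z^j=R^{ji}z^j\mathrm{d}z^i$, $\mathrm{d}$ the Leibniz extension of $z^i\mapsto\mathrm{d}z^i$. $P$ the matrix with rows $(0,0,1,0),(0,0,0,1),(1,0,0,0),(0,1,0,0)$, $(g_{ij})=\tfrac12P$, $(g^{ij})=2P$, metric $g=\sum g_{ij}\mathrm{d}z^i\otimes_A\mathrm{d}z^j$, inverse metric $g^{-1}(\mathrm{d}z^i\otimes_A\mathrm{d}z^j)=g^{ij}$ extended left $A$-linearly. For a two-sided ideal $I\subset A$ and $B=A/I$ (classes $[\cdot]$, quotient $q$), $q_!(\Omega^1_A)=B\otimes_A\Omega^1_A\otimes_AB\cong\Omega^1_A/(I\Omega^1_A+\Omega^1_AI)$, $N^1_B$ is the $B$-subbimodule generated by $[\mathrm{d}a]$, $a\in I$, and $\Omega^1_B=q_!(\Omega^1_A)/N^1_B$. $B$ is a (metrically co-orientable) noncommutative hypersurface if $N^1_B$ is free of rank one with basis $[\nu]$ for some central $\nu\in\Omega^1_A$ with $[g^{-1}(\nu\otimes_A\nu)]=1$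 in $B$. *)

theory Defs
  imports Complex_Main "HOL-Library.Poly_Mapping" "HOL-Library.Function_Algebras"
begin

datatype idx = Z1 | Z2 | Z3 | Z4

lemma UNIV_idx: "(UNIV :: idx set) = {Z1, Z2, Z3, Z4}"
  using idx.exhaust by auto

instance idx :: finite
  by standard (simp add: UNIV_idx)

fun idx_num :: "idx \<Rightarrow> nat" where
  "idx_num Z1 = 0" | "idx_num Z2 = 1" | "idx_num Z3 = 2" | "idx_num Z4 = 3"

text \<open>R^{ab}: row a, column b.\<close>
definition Rmat :: "real \<Rightarrow> idx \<Rightarrow> idx \<Rightarrow> complex" where
  "Rmat \<theta> a b =
     [[1, cis (-\<theta>), 1, cis \<theta>],
      [cis \<theta>, 1, cis (-\<theta>), 1],
      [1, cis \<theta>, 1, cis (-\<theta>)],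
      [cis (-\<theta>), 1, cis \<theta>, 1]] ! idx_num a ! idx_num b"

definition Pmat :: "idx \<Rightarrow> idx \<Rightarrow> complex" where
  "Pmat a b =
     [[0, 0, 1, 0], [0, 0, 0, 1], [1, 0, 0, 0], [0, 1, 0, 0]] ! idx_num a ! idx_num b"

definition gmet :: "idx \<Rightarrow> idx \<Rightarrow> complex" where
  "gmet a b = Pmat a b / 2"

definition ginvmat :: "idx \<Rightarrow> idx \<Rightarrow> complex" where
  "ginvmat a b = 2 * Pmat a b"

type_synonym fa = "idx list \<Rightarrow>\<^sub>0 complex"

definition fmul :: "fa \<Rightarrow> fa \<Rightarrow> fa" where
  "fmul p q = (\<Sum>u\<in>Poly_Mapping.keys p. \<Sum>v\<in>Poly_Mapping.keys q.
                 Poly_Mapping.single (u @ v) (Poly_Mapping.lookup p u * Poly_Mapping.lookup q v))"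

definition mono :: "idx list \<Rightarrow> fa" where
  "mono w = Poly_Mapping.single w 1"

definition const :: "complex \<Rightarrow> fa" where
  "const c = Poly_Mapping.single [] c"

definition gen :: "idx \<Rightarrow> fa" where
  "gen i = mono [i]"

inductive_set tsideal :: "fa set \<Rightarrow> fa set" for S :: "fa set" where
  zero: "0 \<in> tsideal S"
| gen: "s \<in> S \<Longrightarrow> fmul (fmul u s) v \<in> tsideal S"
| add: "x \<in> tsideal S \<Longrightarrow> y \<in> tsideal S \<Longrightarrow> x + y \<in> tsideal S"

definition rels :: "real \<Rightarrow> fa set" where
  "rels \<theta> = {fmul (gen i) (gen j) - fmul (const (Rmat \<theta> j i)) (fmul (gen j) (gen i)) | i j. True}"

text \<open>A = free algebra / (rels). Elements of A are represented by elements of the free algebra;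
  eqA expresses equality of classes in A.\<close>
definition eqA :: "real \<Rightarrow> fa \<Rightarrow> fa \<Rightarrow> bool" where
  "eqA \<theta> p q \<longleftrightarrow> p - q \<in> tsideal (rels \<theta>)"

text \<open>B = A / I where I is the two-sided ideal of A generated by S; as a quotient of the
  free algebra, B = free algebra / (rels + S). Its ideal of representatives: \<close>
definition Jid :: "real \<Rightarrow> fa set \<Rightarrow> fa set" where
  "Jid \<theta> S = tsideal (rels \<theta> \<union> S)"

definition eqB :: "real \<Rightarrow> fa set \<Rightarrow> fa \<Rightarrow> fa \<Rightarrow> bool" where
  "eqB \<theta> S p q \<longleftrightarrow> p - q \<in> Jid \<theta> S"

text \<open>A 1-form sum_i a_i dz^i (free left A-module) is represented by its coefficient
  function i |-> a_i.\<close>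
type_synonym form1 = "idx \<Rightarrow> fa"

definition eqOmega :: "real \<Rightarrow> form1 \<Rightarrow> form1 \<Rightarrow> bool" where
  "eqOmega \<theta> \<omega> \<eta> \<longleftrightarrow> (\<forall>k. eqA \<theta> (\<omega> k) (\<eta> k))"

definition dz :: "idx \<Rightarrow> form1" where
  "dz i = (\<lambda>k. if k = i then const 1 else 0)"

definition lmul :: "fa \<Rightarrow> form1 \<Rightarrow> form1" where
  "lmul a \<omega> = (\<lambda>k. fmul a (\<omega> k))"

text \<open>dz^i p = twist i p dz^i, from dz^i z^j = R^{ji} z^j dz^i.\<close>
definition twist :: "real \<Rightarrow> idx \<Rightarrow> fa \<Rightarrow> fa" where
  "twist \<theta> i p = (\<Sum>w\<in>Poly_Mapping.keys p.
      Poly_Mapping.single w (Poly_Mapping.lookup p w * prod_list (map (\<lambda>j. Rmat \<theta> j i) w)))"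

definition rmul :: "real \<Rightarrow> form1 \<Rightarrow> fa \<Rightarrow> form1" where
  "rmul \<theta> \<omega> p = (\<lambda>k. fmul (\<omega> k) (twist \<theta> k p))"

text \<open>d: Leibniz extension of z^i |-> dz^i.\<close>
fun dword :: "real \<Rightarrow> idx list \<Rightarrow> form1" where
  "dword \<theta> [] = 0"
| "dword \<theta> (j # w) = rmul \<theta> (dz j) (mono w) + lmul (gen j) (dword \<theta> w)"

definition dA :: "real \<Rightarrow> fa \<Rightarrow> form1" where
  "dA \<theta> p = (\<Sum>w\<in>Poly_Mapping.keys p. lmul (const (Poly_Mapping.lookup p w)) (dword \<theta> w))"

text \<open>g^{-1}(omega \<otimes>_A eta), extended left A-linearly: for omega = sum a_i dz^i and
  eta = sum b_j dz^j, omega \<otimes> eta = sum a_i (twist i b_j) dz^i \<otimes> dz^j.\<close>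
definition ginv2 :: "real \<Rightarrow> form1 \<Rightarrow> form1 \<Rightarrow> fa" where
  "ginv2 \<theta> \<omega> \<eta> = (\<Sum>i\<in>UNIV. \<Sum>j\<in>UNIV.
      fmul (const (ginvmat i j)) (fmul (\<omega> i) (twist \<theta> i (\<eta> j))))"

definition central_form :: "real \<Rightarrow> form1 \<Rightarrow> bool" where
  "central_form \<theta> \<nu> \<longleftrightarrow> (\<forall>a. eqOmega \<theta> (lmul a \<nu>) (rmul \<theta> \<nu> a))"

text \<open>Representatives of zero in q_!(Omega^1_A) = Omega^1_A / (I Omega^1_A + Omega^1_A I).\<close>
inductive_set qzero :: "real \<Rightarrow> fa set \<Rightarrow> form1 set" for \<theta> S where
  zeroA: "eqOmega \<theta> \<omega> 0 \<Longrightarrow> \<omega> \<in> qzero \<theta> S"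
| left: "x \<in> Jid \<theta> S \<Longrightarrow> lmul x \<omega> \<in> qzero \<theta> S"
| right: "y \<in> Jid \<theta> S \<Longrightarrow> rmul \<theta> \<omega> y \<in> qzero \<theta> S"
| add: "\<omega> \<in> qzero \<theta> S \<Longrightarrow> \<eta> \<in> qzero \<theta> S \<Longrightarrow> \<omega> + \<eta> \<in> qzero \<theta> S"

definition eqQ :: "real \<Rightarrow> fa set \<Rightarrow> form1 \<Rightarrow> form1 \<Rightarrow> bool" where
  "eqQ \<theta> S \<omega> \<eta> \<longleftrightarrow> \<omega> - \<eta> \<in> qzero \<theta> S"

text \<open>Representatives of elements of the B-subbimodule N^1_B generated by [da], a in I.\<close>
inductive_set Nsub :: "real \<Rightarrow> fa set \<Rightarrow> form1 set" for \<theta> S where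
  zero: "0 \<in> Nsub \<theta> S"
| gen: "a \<in> Jid \<theta> S \<Longrightarrow> lmul u (rmul \<theta> (dA \<theta> a) v) \<in> Nsub \<theta> S"
| add: "\<omega> \<in> Nsub \<theta> S \<Longrightarrow> \<eta> \<in> Nsub \<theta> S \<Longrightarrow> \<omega> + \<eta> \<in> Nsub \<theta> S"

definition inN :: "real \<Rightarrow> fa set \<Rightarrow> form1 \<Rightarrow> bool" where
  "inN \<theta> S \<omega> \<longleftrightarrow> (\<exists>\<eta>\<in>Nsub \<theta> S. eqQ \<theta> S \<omega> \<eta>)"

text \<open>N^1_B is a free (left) B-module of rank one with basis [nu].\<close>
definition N_free_basis :: "real \<Rightarrow> fa set \<Rightarrow> form1 \<Rightarrow> bool" where
  "N_free_basis \<theta> S \<nu> \<longleftrightarrow>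
     inN \<theta> S \<nu> \<and>
     (\<forall>\<omega>. inN \<theta> S \<omega> \<longleftrightarrow> (\<exists>b. eqQ \<theta> S \<omega> (lmul b \<nu>))) \<and>
     (\<forall>b. eqQ \<theta> S (lmul b \<nu>) 0 \<longrightarrow> eqB \<theta> S b 0)"

definition nc_hypersurface :: "real \<Rightarrow> fa set \<Rightarrow> bool" where
  "nc_hypersurface \<theta> S \<longleftrightarrow>
     (\<exists>\<nu>. central_form \<theta> \<nu> \<and> eqB \<theta> S (ginv2 \<theta> \<nu> \<nu>) (const 1) \<and> N_free_basis \<theta> S \<nu>)"

definition Proj :: "real \<Rightarrow> form1 \<Rightarrow> form1 \<Rightarrow> form1" where
  "Proj \<theta> \<nu> \<omega> = \<omega> - lmul (ginv2 \<theta> \<omega> \<nu>) \<nu>"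

end

theory Submission
  imports Defs
begin

text \<open>
  The element f = (z^1 z^3 + z^2 z^4 - 1)/2 is central because a product z^k z^{k'} of partner
  generators commutes with every z^j (R^{j k'} R^{j k} = 1). Its differential is
  \<nu> = (1/2) \<Sum>_k z^{k'} dz^k, and since R^{k' j} = R^{j k}, the coefficient z^{k'} is moved
  past a \<in> A by the same twist as dz^k; hence \<nu> is central. Moreover
  g^{-1}(\<nu> \<otimes> \<nu>) = (z^1 z^3 + z^3 z^1 + z^2 z^4 + z^4 z^2)/2 \<equiv> 1 modulo f.

  For any f with central differential \<nu>, the conormal module is spanned by [\<nu>]: by the
  Leibniz rule d(u s v) \<equiv> u (ds) v modulo I\<Omega> + \<Omega>I, and ds is 0 for a relation of A and \<nu>
  for s = f. It is free: contraction with \<nu> maps I\<Omega> + \<Omega>I into I, because I is stable under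
  the twists, so b\<nu> \<equiv> 0 forces b \<equiv> b g^{-1}(\<nu> \<otimes> \<nu>) \<equiv> 0. Finally
  g^{-1}(dz^i \<otimes> \<nu>) = z^i gives the formula for the projector.
\<close>

section \<open>The free algebra as a monoid ring\<close>

text \<open>Concatenation makes words a monoid; fa is then its monoid ring, whose product is
  fmul.\<close>

instantiation list :: (type) monoid_add
begin
definition zero_list_def: "0 = ([] :: 'a list)"
definition plus_list_def: "(xs :: 'a list) + ys = xs @ ys"
instance by standard (simp_all add: zero_list_def plus_list_def)
end

lemma lookup_sum_single:
  assumes "finite S"
  shows "Poly_Mapping.lookup (\<Sum>w\<in>S. Poly_Mapping.single w (h w)) k = (if k \<in> S then h k else 0)"
  using assms by (simp add: lookup_sum lookup_single when_def sum.delta eq_commute cong: if_cong)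

lemma poly_mapping_expansion:
  "p = (\<Sum>w\<in>Poly_Mapping.keys p. Poly_Mapping.single w (Poly_Mapping.lookup p w))"
  by (rule poly_mapping_eqI) (simp add: lookup_sum_single in_keys_iff)

lemma fmul_eq_times [simp]: "fmul p q = p * q"
proof -
  have "p * q = (\<Sum>u\<in>Poly_Mapping.keys p. Poly_Mapping.single u (Poly_Mapping.lookup p u)) *
                (\<Sum>v\<in>Poly_Mapping.keys q. Poly_Mapping.single v (Poly_Mapping.lookup q v))"
    by (simp flip: poly_mapping_expansion)
  then show ?thesis
    by (simp add: fmul_def sum_distrib_left sum_distrib_right mult_single plus_list_def
        sum.swap[of _ "Poly_Mapping.keys q"])
qed

lemma const_0 [simp]: "const 0 = 0"
  by (simp add: const_def)

lemma const_1 [simp]: "const 1 = 1"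
  by (simp add: const_def zero_list_def[symmetric])

lemma const_add: "const (a + b) = const a + const b"
  by (simp add: const_def single_add)

lemma const_mult: "const (a * b) = const a * const b"
  by (simp add: const_def mult_single plus_list_def)

lemma const_mult_single: "const c * Poly_Mapping.single w a = Poly_Mapping.single w (c * a)"
  by (simp add: const_def mult_single plus_list_def)

lemma const_commute: "const c * p = p * const c"
proof -
  have "const c * Poly_Mapping.single w a = Poly_Mapping.single w a * const c" for w a
    by (simp add: const_def mult_single plus_list_def mult.commute)
  then show ?thesis
    by (subst (1 2) poly_mapping_expansion) (simp add: sum_distrib_left sum_distrib_right)
qed

lemma const_mult_left_commute: "const c * (p * q) = p * (const c * q)"
  by (metis mult.assoc const_commute)

lemma gen_mult_const_mult: "gen i * (const c * p) = const c * (gen i * p)"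
  by (simp add: const_mult_left_commute)

lemma const_mult_const_mult: "const a * (const b * p) = const (a * b) * p"
  by (simp add: const_mult mult.assoc)

lemma lookup_const_mult: "Poly_Mapping.lookup (const c * p) w = c * Poly_Mapping.lookup p w"
  by (subst poly_mapping_expansion)
    (simp add: sum_distrib_left const_mult_single lookup_sum_single in_keys_iff)

lemma mono_Nil: "mono [] = 1"
  by (simp add: mono_def zero_list_def[symmetric])

lemma mono_Cons: "mono (i # w) = gen i * mono w"
  by (simp add: mono_def gen_def mult_single plus_list_def)

lemma single_eq_const_mult_mono: "Poly_Mapping.single w c = const c * mono w"
  by (simp add: mono_def const_mult_single)

lemma free_algebra_induct [case_names const gen add mult]:
  assumes const: "\<And>c. P (const c)" and gen: "\<And>i. P (gen i)"
    and add: "\<And>a b. P a \<Longrightarrow> P b \<Longrightarrow> P (a + b)"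
    and mult: "\<And>a b. P a \<Longrightarrow> P b \<Longrightarrow> P (a * b)"
  shows "P x"
proof -
  have mono: "P (mono w)" for w
    by (induction w) (use const[of 1] gen mult in \<open>simp_all add: mono_Nil mono_Cons\<close>)
  have "P (\<Sum>w\<in>S. Poly_Mapping.single w (h w))" if "finite S" for S h
    using that
    by (induction S rule: finite_induct)
      (use const[of 0] add mult const mono in \<open>simp_all add: single_eq_const_mult_mono\<close>)
  then show ?thesis
    by (subst poly_mapping_expansion) simp
qed

section \<open>The twist homomorphisms\<close>

lemma lookup_twist:
  "Poly_Mapping.lookup (twist \<theta> i p) w = Poly_Mapping.lookup p w * (\<Prod>j\<leftarrow>w. Rmat \<theta> j i)"
  by (simp add: twist_def lookup_sum_single in_keys_iff)

lemma twist_add: "twist \<theta> i (p + q) = twist \<theta> i p + twist \<theta> i q"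
  by (rule poly_mapping_eqI) (simp add: lookup_twist lookup_add algebra_simps)

lemma twist_diff: "twist \<theta> i (p - q) = twist \<theta> i p - twist \<theta> i q"
  by (rule poly_mapping_eqI) (simp add: lookup_twist lookup_minus algebra_simps)

lemma twist_zero [simp]: "twist \<theta> i 0 = 0"
  by (simp add: twist_def)

lemma twist_sum: "twist \<theta> i (\<Sum>x\<in>S. f x) = (\<Sum>x\<in>S. twist \<theta> i (f x))"
  by (rule poly_mapping_eqI) (simp add: lookup_twist lookup_sum sum_distrib_right)

lemma twist_single:
  "twist \<theta> i (Poly_Mapping.single w c) = Poly_Mapping.single w (c * (\<Prod>j\<leftarrow>w. Rmat \<theta> j i))"
  by (rule poly_mapping_eqI) (simp add: lookup_twist lookup_single when_def)

lemma twist_mult: "twist \<theta> i (p * q) = twist \<theta> i p * twist \<theta> i q"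
proof -
  have "twist \<theta> i (Poly_Mapping.single u a * Poly_Mapping.single v b)
      = twist \<theta> i (Poly_Mapping.single u a) * twist \<theta> i (Poly_Mapping.single v b)" for u v a b
    by (simp add: twist_single mult_single plus_list_def mult_ac)
  moreover have "p * q = (\<Sum>u\<in>Poly_Mapping.keys p. Poly_Mapping.single u (Poly_Mapping.lookup p u)) *
      (\<Sum>v\<in>Poly_Mapping.keys q. Poly_Mapping.single v (Poly_Mapping.lookup q v))"
    by (simp flip: poly_mapping_expansion)
  ultimately have "twist \<theta> i (p * q) =
      twist \<theta> i (\<Sum>u\<in>Poly_Mapping.keys p. Poly_Mapping.single u (Poly_Mapping.lookup p u)) *
      twist \<theta> i (\<Sum>v\<in>Poly_Mapping.keys q. Poly_Mapping.single v (Poly_Mapping.lookup q v))"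
    by (simp add: sum_distrib_left sum_distrib_right twist_sum)
  then show ?thesis
    by (simp flip: poly_mapping_expansion)
qed

lemma twist_const [simp]: "twist \<theta> i (const c) = const c"
  by (simp add: const_def twist_single)

lemma twist_one [simp]: "twist \<theta> i 1 = 1"
  using twist_const[of \<theta> i 1] by simp

lemma twist_gen: "twist \<theta> i (gen j) = const (Rmat \<theta> j i) * gen j"
  by (simp add: gen_def mono_def twist_single const_mult_single)

section \<open>Two-sided ideals\<close>

lemma tsideal_base: "s \<in> S \<Longrightarrow> s \<in> tsideal S"
  using tsideal.gen[of s S 1 1] by simp

lemma tsideal_mult_left: "x \<in> tsideal S \<Longrightarrow> a * x \<in> tsideal S"
proof (induction rule: tsideal.induct)
  case (gen s u v)
  then show ?case using tsideal.gen[of s S "a * u" v] by (simp add: mult.assoc)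
qed (simp_all add: tsideal.zero tsideal.add distrib_left)

lemma tsideal_mult_right: "x \<in> tsideal S \<Longrightarrow> x * a \<in> tsideal S"
proof (induction rule: tsideal.induct)
  case (gen s u v)
  then show ?case using tsideal.gen[of s S u "v * a"] by (simp add: mult.assoc)
qed (simp_all add: tsideal.zero tsideal.add distrib_right)

lemma tsideal_diff: "x \<in> tsideal S \<Longrightarrow> y \<in> tsideal S \<Longrightarrow> x - y \<in> tsideal S"
  using tsideal.add[of x S "(- 1) * y"] tsideal_mult_left[of y S "- 1"] by simp

lemma tsideal_uminus: "x \<in> tsideal S \<Longrightarrow> - x \<in> tsideal S"
  using tsideal_diff[OF tsideal.zero] by fastforce

lemma tsideal_sum: "(\<And>x. x \<in> A \<Longrightarrow> f x \<in> tsideal S) \<Longrightarrow> (\<Sum>x\<in>A. f x) \<in> tsideal S"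
  by (induction A rule: infinite_finite_induct) (auto intro: tsideal.zero tsideal.add)

lemma tsideal_mono:
  assumes "S \<subseteq> T"
  shows "x \<in> tsideal S \<Longrightarrow> x \<in> tsideal T"
proof (induction rule: tsideal.induct)
  case (gen s u v)
  then show ?case using tsideal.gen[of s T u v] assms by auto
qed (simp_all add: tsideal.zero tsideal.add)

lemma tsideal_twist_closed:
  assumes "\<And>s. s \<in> S \<Longrightarrow> twist \<theta> i s \<in> tsideal S"
  shows "x \<in> tsideal S \<Longrightarrow> twist \<theta> i x \<in> tsideal S"
proof (induction rule: tsideal.induct)
  case (gen s u v)
  then show ?case
    using assms[of s] by (simp add: twist_mult tsideal_mult_left tsideal_mult_right)
qed (simp_all add: tsideal.zero tsideal.add twist_add)

lemma tsideal_rels_subset_Jid: "x \<in> tsideal (rels \<theta>) \<Longrightarrow> x \<in> Jid \<theta> S"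
  unfolding Jid_def by (rule tsideal_mono[rotated]) auto

lemma rel_in_tsideal: "gen i * gen j - const (Rmat \<theta> j i) * (gen j * gen i) \<in> tsideal (rels \<theta>)"
  by (rule tsideal_base) (auto simp: rels_def)

lemma twist_rel_in_tsideal:
  assumes "s \<in> rels \<theta>"
  shows "twist \<theta> i s \<in> tsideal (rels \<theta>)"
proof -
  obtain a b where s: "s = gen a * gen b - const (Rmat \<theta> b a) * (gen b * gen a)"
    using assms by (auto simp: rels_def)
  have gen_pair: "twist \<theta> i (gen x * gen y) = const (Rmat \<theta> x i * Rmat \<theta> y i) * (gen x * gen y)" for x y
    by (simp only: twist_mult twist_gen const_mult mult.assoc const_mult_left_commute[of _ "gen x"])
  have "twist \<theta> i s = const (Rmat \<theta> a i * Rmat \<theta> b i) * (gen a * gen b)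
      - const (Rmat \<theta> b a) * (const (Rmat \<theta> b i * Rmat \<theta> a i) * (gen b * gen a))"
    by (simp add: s twist_diff twist_mult[of _ _ "const _"] gen_pair)
  also have "\<dots> = const (Rmat \<theta> a i * Rmat \<theta> b i) * s"
    by (simp add: s right_diff_distrib const_mult_const_mult mult_ac)
  finally show ?thesis
    using assms by (simp add: tsideal_mult_left tsideal_base)
qed

lemma Jid_twist_closed:
  assumes "\<And>s j. s \<in> S \<Longrightarrow> twist \<theta> j s \<in> Jid \<theta> S"
  shows "x \<in> Jid \<theta> S \<Longrightarrow> twist \<theta> i x \<in> Jid \<theta> S"
  unfolding Jid_def
proof (rule tsideal_twist_closed)
  fix s assume "s \<in> rels \<theta> \<union> S"
  then show "twist \<theta> i s \<in> tsideal (rels \<theta> \<union> S)"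
    using assms twist_rel_in_tsideal tsideal_rels_subset_Jid unfolding Jid_def by blast
qed

lemma commutation_mod_tsideal:
  assumes gen: "\<And>j. gen j * x - x * \<sigma> (gen j) \<in> tsideal S"
    and hom: "\<And>a b. \<sigma> (a + b) = \<sigma> a + \<sigma> b" "\<And>a b. \<sigma> (a * b) = \<sigma> a * \<sigma> b"
      "\<And>c. \<sigma> (const c) = const c"
  shows "a * x - x * \<sigma> a \<in> tsideal S"
proof (induction a rule: free_algebra_induct)
  case (const c)
  then show ?case by (simp add: hom const_commute tsideal.zero)
next
  case (gen j)
  then show ?case by (fact assms)
next
  case (add a b)
  have "(a + b) * x - x * \<sigma> (a + b) = (a * x - x * \<sigma> a) + (b * x - x * \<sigma> b)"
    by (simp add: hom algebra_simps)
  then show ?case using add by (simp add: tsideal.add)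
next
  case (mult a b)
  have "a * b * x - x * \<sigma> (a * b) = a * (b * x - x * \<sigma> b) + (a * x - x * \<sigma> a) * \<sigma> b"
    by (simp add: hom algebra_simps)
  then show ?case using mult by (simp add: tsideal.add tsideal_mult_left tsideal_mult_right)
qed

lemma sum_fun_apply: "(\<Sum>x\<in>S. (f x :: 'a \<Rightarrow> 'b::comm_monoid_add)) k = (\<Sum>x\<in>S. f x k)"
  by (induction S rule: infinite_finite_induct) auto

lemma lmul_apply: "lmul a \<omega> k = a * \<omega> k"
  by (simp add: lmul_def)

lemma rmul_apply: "rmul \<theta> \<omega> p k = \<omega> k * twist \<theta> k p"
  by (simp add: rmul_def)

lemma lmul_add_left: "lmul (a + b) \<omega> = lmul a \<omega> + lmul b \<omega>"
  by (simp add: fun_eq_iff lmul_apply distrib_right)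

lemma lmul_add_right: "lmul a (\<omega> + \<eta>) = lmul a \<omega> + lmul a \<eta>"
  by (simp add: fun_eq_iff lmul_apply distrib_left)

lemma lmul_zero [simp]: "lmul 0 \<omega> = 0"
  by (simp add: fun_eq_iff lmul_apply)

lemma lmul_zero_right [simp]: "lmul a 0 = 0"
  by (simp add: fun_eq_iff lmul_apply)

lemma lmul_one [simp]: "lmul 1 \<omega> = \<omega>"
  by (simp add: fun_eq_iff lmul_apply)

lemma lmul_lmul: "lmul a (lmul b \<omega>) = lmul (a * b) \<omega>"
  by (simp add: fun_eq_iff lmul_apply mult.assoc)

lemma lmul_sum: "lmul a (\<Sum>x\<in>S. f x) = (\<Sum>x\<in>S. lmul a (f x))"
  by (simp add: fun_eq_iff lmul_apply sum_fun_apply sum_distrib_left)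

lemma rmul_add_left: "rmul \<theta> (\<omega> + \<eta>) p = rmul \<theta> \<omega> p + rmul \<theta> \<eta> p"
  by (simp add: fun_eq_iff rmul_apply distrib_right)

lemma rmul_zero_left [simp]: "rmul \<theta> 0 p = 0"
  by (simp add: fun_eq_iff rmul_apply)

lemma rmul_one [simp]: "rmul \<theta> \<omega> 1 = \<omega>"
  by (simp add: fun_eq_iff rmul_apply)

lemma rmul_rmul: "rmul \<theta> (rmul \<theta> \<omega> p) q = rmul \<theta> \<omega> (p * q)"
  by (simp add: fun_eq_iff rmul_apply twist_mult mult.assoc)

lemma rmul_lmul: "rmul \<theta> (lmul a \<omega>) q = lmul a (rmul \<theta> \<omega> q)"
  by (simp add: fun_eq_iff rmul_apply lmul_apply mult.assoc)

lemma rmul_sum: "rmul \<theta> \<omega> (\<Sum>x\<in>S. f x) = (\<Sum>x\<in>S. rmul \<theta> \<omega> (f x))"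
  by (simp add: fun_eq_iff rmul_apply sum_fun_apply sum_distrib_left twist_sum)

lemma rmul_const_mult: "rmul \<theta> \<omega> (const c * p) = lmul (const c) (rmul \<theta> \<omega> p)"
  by (simp add: fun_eq_iff rmul_apply lmul_apply twist_mult const_mult_left_commute)

section \<open>The differential\<close>

lemma dA_eq_sum_superset:
  assumes "finite S" "Poly_Mapping.keys p \<subseteq> S"
  shows "dA \<theta> p = (\<Sum>w\<in>S. lmul (const (Poly_Mapping.lookup p w)) (dword \<theta> w))"
  unfolding dA_def using assms by (intro sum.mono_neutral_left) (auto simp: in_keys_iff)

lemma dA_add: "dA \<theta> (p + q) = dA \<theta> p + dA \<theta> q"
proof -
  let ?S = "Poly_Mapping.keys p \<union> Poly_Mapping.keys q"
  show ?thesis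
    by (simp add: dA_eq_sum_superset[OF _ keys_add] dA_eq_sum_superset[of ?S p]
        dA_eq_sum_superset[of ?S q] lookup_add const_add lmul_add_left sum.distrib)
qed

lemma dA_zero [simp]: "dA \<theta> 0 = 0"
  by (simp add: dA_def)

lemma dA_diff: "dA \<theta> (p - q) = dA \<theta> p - dA \<theta> q"
  using dA_add[of \<theta> "p - q" q] by (simp add: eq_diff_eq)

lemma dA_sum: "dA \<theta> (\<Sum>x\<in>S. f x) = (\<Sum>x\<in>S. dA \<theta> (f x))"
  by (induction S rule: infinite_finite_induct) (auto simp: dA_add)

lemma dA_const_mult: "dA \<theta> (const c * p) = lmul (const c) (dA \<theta> p)"
proof -
  have "Poly_Mapping.keys (const c * p) \<subseteq> Poly_Mapping.keys p"
    by (auto simp: in_keys_iff lookup_const_mult)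
  then have "dA \<theta> (const c * p)
      = (\<Sum>w\<in>Poly_Mapping.keys p. lmul (const (Poly_Mapping.lookup (const c * p) w)) (dword \<theta> w))"
    by (rule dA_eq_sum_superset[rotated]) simp
  then show ?thesis
    by (simp add: dA_def lookup_const_mult const_mult lmul_sum lmul_lmul)
qed

lemma dA_mono: "dA \<theta> (mono w) = dword \<theta> w"
  by (simp add: mono_def dA_def)

lemma dA_const [simp]: "dA \<theta> (const c) = 0"
  using dA_const_mult[of \<theta> c 1] dA_mono[of \<theta> "[]"] by (simp add: mono_Nil)

lemma dA_one [simp]: "dA \<theta> 1 = 0"
  using dA_const[of \<theta> 1] by simp

lemma dA_gen [simp]: "dA \<theta> (gen i) = dz i"
  using dA_mono[of \<theta> "[i]"] by (simp add: gen_def mono_Nil)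

lemma dA_gen_mult: "dA \<theta> (gen i * q) = rmul \<theta> (dz i) q + lmul (gen i) (dA \<theta> q)"
proof -
  define K where "K = Poly_Mapping.keys q"
  define c where "c = Poly_Mapping.lookup q"
  have q: "q = (\<Sum>w\<in>K. const (c w) * mono w)"
    unfolding K_def c_def by (subst poly_mapping_expansion) (simp add: single_eq_const_mult_mono)
  have "gen i * (const a * mono w) = const a * mono (i # w)" for a w
    by (simp add: mono_Cons const_mult_left_commute)
  then have "dA \<theta> (gen i * q) = (\<Sum>w\<in>K. dA \<theta> (const (c w) * mono (i # w)))"
    by (subst q) (simp add: sum_distrib_left dA_sum)
  also have "\<dots> = (\<Sum>w\<in>K. lmul (const (c w)) (rmul \<theta> (dz i) (mono w)))
      + (\<Sum>w\<in>K. lmul (gen i) (lmul (const (c w)) (dword \<theta> w)))"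
    by (simp add: dA_const_mult dA_mono lmul_add_right sum.distrib lmul_lmul
        const_commute[of _ "gen i"])
  also have "\<dots> = rmul \<theta> (dz i) q + lmul (gen i) (dA \<theta> q)"
    by (subst (1 2) q) (simp add: rmul_sum rmul_const_mult dA_sum dA_const_mult dA_mono lmul_sum)
  finally show ?thesis .
qed

lemma dA_mult: "dA \<theta> (p * q) = rmul \<theta> (dA \<theta> p) q + lmul p (dA \<theta> q)"
proof (induction p arbitrary: q rule: free_algebra_induct)
  case (const c)
  then show ?case by (simp add: dA_const_mult fun_eq_iff rmul_apply lmul_apply)
next
  case (gen i)
  then show ?case by (simp add: dA_gen_mult)
next
  case (add a b)
  then show ?case
    by (simp add: distrib_right dA_add fun_eq_iff rmul_apply lmul_apply algebra_simps)
next
  case (mult a b)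
  then show ?case
    by (simp add: mult.assoc fun_eq_iff rmul_apply lmul_apply algebra_simps twist_mult)
qed

lemma Rmat_mult_transpose: "Rmat \<theta> i j * Rmat \<theta> j i = 1"
  by (cases i; cases j) (simp_all add: Rmat_def cis_mult)

lemma dA_rel:
  assumes "s \<in> rels \<theta>"
  shows "dA \<theta> s = 0"
proof -
  obtain a b where s: "s = gen a * gen b - const (Rmat \<theta> b a) * (gen b * gen a)"
    using assms by (auto simp: rels_def)
  have "const (Rmat \<theta> b a) * (const (Rmat \<theta> a b) * x) = x" for x
    using Rmat_mult_transpose[of \<theta> b a] by (simp add: const_mult_const_mult)
  then show ?thesis
    by (simp add: fun_eq_iff s dA_diff dA_const_mult dA_mult lmul_apply rmul_apply dz_def
        twist_gen distrib_left right_diff_distrib)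
qed

section \<open>Forms modulo I\<Omega> + \<Omega>I\<close>

lemma qzero_zero: "0 \<in> qzero \<theta> S"
  by (rule qzero.zeroA) (simp add: eqOmega_def eqA_def tsideal.zero)

lemma qzero_of_tsideal_rels: "(\<And>k. \<omega> k \<in> tsideal (rels \<theta>)) \<Longrightarrow> \<omega> \<in> qzero \<theta> S"
  by (rule qzero.zeroA) (simp add: eqOmega_def eqA_def)

lemma qzero_lmul: "\<omega> \<in> qzero \<theta> S \<Longrightarrow> lmul u \<omega> \<in> qzero \<theta> S"
proof (induction rule: qzero.induct)
  case (zeroA \<omega>)
  then show ?case
    by (intro qzero_of_tsideal_rels) (simp add: eqOmega_def eqA_def lmul_apply tsideal_mult_left)
next
  case (left x \<omega>)
  then show ?case by (simp add: lmul_lmul qzero.left Jid_def tsideal_mult_left)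
next
  case (right y \<omega>)
  then show ?case by (simp flip: rmul_lmul add: qzero.right)
next
  case (add \<omega> \<eta>)
  show ?case unfolding lmul_add_right by (rule qzero.add[OF add.IH])
qed

lemma qzero_rmul: "\<omega> \<in> qzero \<theta> S \<Longrightarrow> rmul \<theta> \<omega> v \<in> qzero \<theta> S"
proof (induction rule: qzero.induct)
  case (zeroA \<omega>)
  then show ?case
    by (intro qzero_of_tsideal_rels) (simp add: eqOmega_def eqA_def rmul_apply tsideal_mult_right)
next
  case (left x \<omega>)
  then show ?case by (simp add: rmul_lmul qzero.left)
next
  case (right y \<omega>)
  then show ?case by (simp add: rmul_rmul qzero.right Jid_def tsideal_mult_right)
next
  case (add \<omega> \<eta>)
  show ?case unfolding rmul_add_left by (rule qzero.add[OF add.IH])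
qed

lemma eqQ_refl: "eqQ \<theta> S \<omega> \<omega>"
  by (simp add: eqQ_def qzero_zero)

lemma eqQ_trans: "eqQ \<theta> S \<omega> \<eta> \<Longrightarrow> eqQ \<theta> S \<eta> \<zeta> \<Longrightarrow> eqQ \<theta> S \<omega> \<zeta>"
  unfolding eqQ_def using qzero.add[of "\<omega> - \<eta>" \<theta> S "\<eta> - \<zeta>"] by simp

lemma eqQ_add:
  "eqQ \<theta> S \<omega> \<omega>' \<Longrightarrow> eqQ \<theta> S \<eta> \<eta>' \<Longrightarrow> eqQ \<theta> S (\<omega> + \<eta>) (\<omega>' + \<eta>')"
  unfolding eqQ_def using qzero.add[of "\<omega> - \<omega>'" \<theta> S "\<eta> - \<eta>'"] by (simp add: algebra_simps)

lemma eqQ_lmul_rmul: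
  assumes "eqQ \<theta> S \<omega> \<eta>"
  shows "eqQ \<theta> S (lmul u (rmul \<theta> \<omega> v)) (lmul u (rmul \<theta> \<eta> v))"
proof -
  have "lmul u (rmul \<theta> \<omega> v) - lmul u (rmul \<theta> \<eta> v) = lmul u (rmul \<theta> (\<omega> - \<eta>) v)"
    by (simp add: fun_eq_iff lmul_apply rmul_apply algebra_simps)
  then show ?thesis
    using assms unfolding eqQ_def by (simp add: qzero_lmul qzero_rmul)
qed

lemma central_form_lmul_rmul:
  assumes "central_form \<theta> \<nu>"
  shows "eqQ \<theta> S (lmul u (rmul \<theta> \<nu> v)) (lmul (u * v) \<nu>)"
  unfolding eqQ_def
proof (rule qzero_of_tsideal_rels)
  fix k
  have "v * \<nu> k - \<nu> k * twist \<theta> k v \<in> tsideal (rels \<theta>)"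
    using assms by (simp add: central_form_def eqOmega_def eqA_def lmul_apply rmul_apply)
  then have "u * - (v * \<nu> k - \<nu> k * twist \<theta> k v) \<in> tsideal (rels \<theta>)"
    by (intro tsideal_mult_left tsideal_uminus)
  then show "(lmul u (rmul \<theta> \<nu> v) - lmul (u * v) \<nu>) k \<in> tsideal (rels \<theta>)"
    by (simp add: lmul_apply rmul_apply algebra_simps)
qed

section \<open>The conormal module of a central hypersurface\<close>

lemma dA_sandwich:
  assumes "s \<in> Jid \<theta> S"
  shows "eqQ \<theta> S (dA \<theta> (u * s * v)) (lmul u (rmul \<theta> (dA \<theta> s) v))"
proof -
  have "rmul \<theta> (dA \<theta> u) (s * v) \<in> qzero \<theta> S" "lmul (u * s) (dA \<theta> v) \<in> qzero \<theta> S"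
    using assms by (auto intro: qzero.left qzero.right simp: Jid_def tsideal_mult_left tsideal_mult_right)
  moreover have "dA \<theta> (u * s * v) - lmul u (rmul \<theta> (dA \<theta> s) v)
      = rmul \<theta> (dA \<theta> u) (s * v) + lmul (u * s) (dA \<theta> v)"
    by (simp add: dA_mult rmul_add_left rmul_rmul rmul_lmul lmul_add_right lmul_lmul algebra_simps)
  ultimately show ?thesis
    unfolding eqQ_def by (simp add: qzero.add)
qed

lemma dA_Jid_multiple:
  assumes central: "central_form \<theta> (dA \<theta> f)" and "a \<in> Jid \<theta> {f}"
  shows "\<exists>c. eqQ \<theta> {f} (dA \<theta> a) (lmul c (dA \<theta> f))"
  using \<open>a \<in> Jid \<theta> {f}\<close> unfolding Jid_def
proof (induction rule: tsideal.induct)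
  case zero
  then show ?case using eqQ_refl[of \<theta> "{f}" 0] by (metis dA_zero lmul_zero)
next
  case (gen s u v)
  then have "eqQ \<theta> {f} (dA \<theta> (fmul (fmul u s) v)) (lmul u (rmul \<theta> (dA \<theta> s) v))"
    using dA_sandwich by (simp add: Jid_def tsideal_base)
  moreover obtain c where "eqQ \<theta> {f} (lmul u (rmul \<theta> (dA \<theta> s) v)) (lmul c (dA \<theta> f))"
  proof (cases "s = f")
    case True
    then show ?thesis using that central_form_lmul_rmul[OF central] by blast
  next
    case False
    then have "dA \<theta> s = 0" using gen dA_rel by simp
    then have "lmul u (rmul \<theta> (dA \<theta> s) v) = 0"
      by (simp add: fun_eq_iff lmul_apply rmul_apply)
    then show ?thesis using that[of 0] eqQ_refl by simp
  qed
  ultimately show ?case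
    using eqQ_trans by blast
next
  case (add x y)
  then show ?case
    by (metis dA_add eqQ_add lmul_add_left)
qed

lemma Nsub_multiple:
  assumes "central_form \<theta> (dA \<theta> f)" and "\<omega> \<in> Nsub \<theta> {f}"
  shows "\<exists>b. eqQ \<theta> {f} \<omega> (lmul b (dA \<theta> f))"
  using \<open>\<omega> \<in> Nsub \<theta> {f}\<close>
proof (induction rule: Nsub.induct)
  case zero
  then show ?case using eqQ_refl[of \<theta> "{f}" 0] by (metis lmul_zero)
next
  case (gen a u v)
  obtain c where "eqQ \<theta> {f} (dA \<theta> a) (lmul c (dA \<theta> f))"
    using dA_Jid_multiple[OF assms(1) gen] by blast
  then have "eqQ \<theta> {f} (lmul u (rmul \<theta> (dA \<theta> a) v)) (lmul (u * c) (rmul \<theta> (dA \<theta> f) v))"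
    by (auto dest: eqQ_lmul_rmul simp: rmul_lmul lmul_lmul)
  then show ?case
    using eqQ_trans central_form_lmul_rmul[OF assms(1)] by blast
next
  case (add \<omega> \<eta>)
  then show ?case
    by (metis eqQ_add lmul_add_left)
qed

lemma ginv2_lmul: "ginv2 \<theta> (lmul b \<omega>) \<eta> = b * ginv2 \<theta> \<omega> \<eta>"
  by (simp add: ginv2_def sum_distrib_left lmul_apply mult.assoc const_mult_left_commute)

lemma ginv2_add_left: "ginv2 \<theta> (\<omega> + \<omega>') \<eta> = ginv2 \<theta> \<omega> \<eta> + ginv2 \<theta> \<omega>' \<eta>"
  by (simp add: ginv2_def sum.distrib distrib_left distrib_right)

lemma ginv2_qzero:
  assumes twist_closed: "\<And>s j. s \<in> S \<Longrightarrow> twist \<theta> j s \<in> Jid \<theta> S"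
    and "\<omega> \<in> qzero \<theta> S"
  shows "ginv2 \<theta> \<omega> \<eta> \<in> Jid \<theta> S"
  using \<open>\<omega> \<in> qzero \<theta> S\<close>
proof (induction rule: qzero.induct)
  case (zeroA \<omega>)
  then have "\<omega> i \<in> Jid \<theta> S" for i
    by (simp add: eqOmega_def eqA_def tsideal_rels_subset_Jid)
  then show ?case
    unfolding ginv2_def Jid_def
    by (intro tsideal_sum) (simp add: tsideal_mult_left tsideal_mult_right)
next
  case (left x \<omega>)
  then show ?case
    unfolding ginv2_lmul Jid_def by (rule tsideal_mult_right)
next
  case (right y \<omega>)
  then have "twist \<theta> i y \<in> Jid \<theta> S" for i
    using Jid_twist_closed twist_closed by blast
  then show ?case
    unfolding ginv2_def Jid_def
    by (intro tsideal_sum) (simp add: rmul_apply twist_mult mult.assoc tsideal_mult_left tsideal_mult_right)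
next
  case (add \<omega>\<^sub>1 \<omega>\<^sub>2)
  then show ?case
    unfolding ginv2_add_left Jid_def by (blast intro: tsideal.add)
qed

theorem N_free_basis_dA:
  assumes central: "central_form \<theta> (dA \<theta> f)"
    and twist_closed: "\<And>j. twist \<theta> j f \<in> Jid \<theta> {f}"
    and unit: "eqB \<theta> {f} (ginv2 \<theta> (dA \<theta> f) (dA \<theta> f)) (const 1)"
  shows "N_free_basis \<theta> {f} (dA \<theta> f)"
  unfolding N_free_basis_def
proof (intro conjI allI impI iffI)
  have f_in_J: "f \<in> Jid \<theta> {f}"
    unfolding Jid_def by (simp add: tsideal_base)
  have multiple_in_N: "lmul b (dA \<theta> f) \<in> Nsub \<theta> {f}" for b
    using Nsub.gen[OF f_in_J, of b 1] by simp
  then show "inN \<theta> {f} (dA \<theta> f)"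
    unfolding inN_def using eqQ_refl lmul_one by metis
  fix \<omega>
  show "\<exists>b. eqQ \<theta> {f} \<omega> (lmul b (dA \<theta> f))" if "inN \<theta> {f} \<omega>"
    using that Nsub_multiple[OF central] eqQ_trans unfolding inN_def by meson
  show "inN \<theta> {f} \<omega>" if "\<exists>b. eqQ \<theta> {f} \<omega> (lmul b (dA \<theta> f))"
    using that multiple_in_N unfolding inN_def by blast
next
  fix b
  assume "eqQ \<theta> {f} (lmul b (dA \<theta> f)) 0"
  moreover have "\<And>s j. s \<in> {f} \<Longrightarrow> twist \<theta> j s \<in> Jid \<theta> {f}"
    using twist_closed by simp
  ultimately have "b * ginv2 \<theta> (dA \<theta> f) (dA \<theta> f) \<in> Jid \<theta> {f}"
    using ginv2_qzero unfolding eqQ_def by (fastforce simp flip: ginv2_lmul)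
  moreover have "b * (ginv2 \<theta> (dA \<theta> f) (dA \<theta> f) - 1) \<in> Jid \<theta> {f}"
    using unit unfolding eqB_def Jid_def by (simp add: tsideal_mult_left)
  ultimately have "b \<in> Jid \<theta> {f}"
    unfolding Jid_def using tsideal_diff by (fastforce simp: algebra_simps)
  then show "eqB \<theta> {f} b 0"
    by (simp add: eqB_def)
qed

corollary nc_hypersurface_dA:
  assumes "central_form \<theta> (dA \<theta> f)"
    and "\<And>j. twist \<theta> j f \<in> Jid \<theta> {f}"
    and "eqB \<theta> {f} (ginv2 \<theta> (dA \<theta> f) (dA \<theta> f)) (const 1)"
  shows "nc_hypersurface \<theta> {f}"
  using assms N_free_basis_dA unfolding nc_hypersurface_def by blast

section \<open>The Connes--Landi sphere\<close>

fun partner :: "idx \<Rightarrow> idx" where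
  "partner Z1 = Z3" | "partner Z2 = Z4" | "partner Z3 = Z1" | "partner Z4 = Z2"

lemma partner_partner [simp]: "partner (partner i) = i"
  by (cases i) simp_all

lemma Pmat_eq_partner: "Pmat i j = (if j = partner i then 1 else 0)"
  by (cases i; cases j) (simp_all add: Pmat_def)

lemma Rmat_diag: "Rmat \<theta> i i = 1"
  by (cases i) (simp_all add: Rmat_def)

lemma Rmat_partner_left: "Rmat \<theta> (partner k) j = Rmat \<theta> j k"
  by (cases k; cases j) (simp_all add: Rmat_def)

lemma Rmat_partner_right: "Rmat \<theta> j (partner k) * Rmat \<theta> j k = 1"
  by (cases k; cases j) (simp_all add: Rmat_def cis_mult)

lemma Rmat_partner_diag: "Rmat \<theta> k (partner k) = 1"
  by (cases k) (simp_all add: Rmat_def)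

definition sphere_rel :: fa where
  "sphere_rel = const (1/2) * (gen Z1 * gen Z3 + gen Z2 * gen Z4 - 1)"

definition sphere_normal :: form1 where
  "sphere_normal k = const (1/2) * gen (partner k)"

lemma gen_partner_pair_commute:
  "gen j * (gen k * gen (partner k)) - gen k * gen (partner k) * gen j \<in> tsideal (rels \<theta>)"
proof -
  let ?a = "Rmat \<theta> j (partner k)" and ?b = "Rmat \<theta> j k"
  have "gen k * gen (partner k) * gen j - gen j * (gen k * gen (partner k))
      = gen k * (gen (partner k) * gen j - const ?a * (gen j * gen (partner k)))
        + const ?a * ((gen k * gen j - const ?b * (gen j * gen k)) * gen (partner k))"
    using Rmat_partner_right[of \<theta> j k]
    by (simp add: right_diff_distrib left_diff_distrib distrib_left mult.assoc 
     const_mult_left_commute[of _ "gen k", symmetric] const_mult_const_mult)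
  then have "gen k * gen (partner k) * gen j - gen j * (gen k * gen (partner k)) \<in> tsideal (rels \<theta>)"
    by (simp add: tsideal.add tsideal_mult_left tsideal_mult_right rel_in_tsideal)
  then show ?thesis
    using tsideal_uminus by fastforce
qed

lemma sphere_rel_central: "a * sphere_rel - sphere_rel * a \<in> tsideal (rels \<theta>)"
proof (rule commutation_mod_tsideal[where \<sigma> = id, simplified])
  fix j
  have "gen j * sphere_rel - sphere_rel * gen j
      = const (1/2) * ((gen j * (gen Z1 * gen Z3) - gen Z1 * gen Z3 * gen j)
          + (gen j * (gen Z2 * gen Z4) - gen Z2 * gen Z4 * gen j))"
    unfolding sphere_rel_def using const_commute[of "1/2" "gen j"]
    by (simp add: algebra_simps const_mult_left_commute)
  then show "gen j * sphere_rel - sphere_rel * gen j \<in> tsideal (rels \<theta>)"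
    using gen_partner_pair_commute[of j Z1 \<theta>] gen_partner_pair_commute[of j Z2 \<theta>]
    by (simp add: tsideal.add tsideal_mult_left)
qed

lemma twist_sphere_rel: "twist \<theta> i sphere_rel = sphere_rel"
proof -
  have "twist \<theta> i (gen k * gen (partner k)) = gen k * gen (partner k)" for k
    using Rmat_partner_left[of \<theta> k i] Rmat_mult_transpose[of \<theta> k i]
    by (simp add: twist_mult twist_gen mult.assoc gen_mult_const_mult const_mult_const_mult)
  from this[of Z1] this[of Z2] show ?thesis
    by (simp add: sphere_rel_def twist_mult twist_add twist_diff)
qed

lemma dA_sphere_rel: "dA \<theta> sphere_rel = sphere_normal"
proof -
  have "dA \<theta> sphere_rel = lmul (const (1/2))
      (rmul \<theta> (dz Z1) (gen Z3) + lmul (gen Z1) (dz Z3) + (rmul \<theta> (dz Z2) (gen Z4) + lmul (gen Z2) (dz Z4)))"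
    unfolding sphere_rel_def by (simp add: dA_const_mult dA_diff dA_add dA_mult)
  also have "\<dots> = sphere_normal"
  proof (rule ext)
    fix k
    show "lmul (const (1/2)) (rmul \<theta> (dz Z1) (gen Z3) + lmul (gen Z1) (dz Z3)
        + (rmul \<theta> (dz Z2) (gen Z4) + lmul (gen Z2) (dz Z4))) k = sphere_normal k"
      using Rmat_partner_diag[of \<theta> k] Rmat_partner_diag[of \<theta> "partner k"]
      by (cases k) (simp_all add: sphere_normal_def lmul_apply rmul_apply dz_def twist_gen)
  qed
  finally show ?thesis .
qed

lemma sphere_normal_central: "central_form \<theta> sphere_normal"
proof -
  have "a * sphere_normal k - sphere_normal k * twist \<theta> k a \<in> tsideal (rels \<theta>)" for a k
  proof (rule commutation_mod_tsideal[where \<sigma> = "twist \<theta> k"])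
    fix j
    have "gen j * sphere_normal k - sphere_normal k * twist \<theta> k (gen j)
        = const (1/2) * (gen j * gen (partner k)
            - const (Rmat \<theta> (partner k) j) * (gen (partner k) * gen j))"
      by (simp add: sphere_normal_def twist_gen Rmat_partner_left right_diff_distrib mult.assoc
          gen_mult_const_mult const_mult_const_mult)
    then show "gen j * sphere_normal k - sphere_normal k * twist \<theta> k (gen j) \<in> tsideal (rels \<theta>)"
      by (simp add: tsideal_mult_left rel_in_tsideal)
  qed (simp_all add: twist_add twist_mult)
  then show ?thesis
    by (simp add: central_form_def eqOmega_def eqA_def lmul_apply rmul_apply)
qed

lemma metric_sum_eq_sphere_normal:
  "(\<Sum>i\<in>UNIV. \<Sum>j\<in>UNIV. lmul (const (gmet i j) * gen i) (dz j)) = sphere_normal"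
proof (rule ext)
  fix k
  show "(\<Sum>i\<in>UNIV. \<Sum>j\<in>UNIV. lmul (const (gmet i j) * gen i) (dz j)) k = sphere_normal k"
    by (cases k) (simp_all add: sum_fun_apply lmul_apply dz_def UNIV_idx gmet_def Pmat_def sphere_normal_def)
qed

lemma ginv2_eq_sum_partner:
  "ginv2 \<theta> \<omega> \<eta> = (\<Sum>i\<in>UNIV. const 2 * (\<omega> i * twist \<theta> i (\<eta> (partner i))))"
proof -
  have "const (ginvmat i j) * h = (if j = partner i then const 2 * h else 0)" for i j h
    by (simp add: ginvmat_def Pmat_eq_partner)
  then show ?thesis
    by (simp add: ginv2_def sum.delta')
qed

lemma twist_sphere_normal_partner: "twist \<theta> i (sphere_normal (partner i)) = const (1/2) * gen i"
  by (simp add: sphere_normal_def twist_mult twist_gen Rmat_diag)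

lemma ginv2_dz_sphere_normal: "ginv2 \<theta> (dz i) sphere_normal = gen i"
proof -
  have "const 2 * (dz i k * twist \<theta> k (sphere_normal (partner k)))
      = (if k = i then const 2 * (const (1/2) * gen i) else 0)" for k
    by (simp add: dz_def twist_sphere_normal_partner)
  then show ?thesis
    by (simp add: ginv2_eq_sum_partner sum.delta' const_mult_const_mult)
qed

lemma ginv2_sphere_normal:
  "ginv2 \<theta> sphere_normal sphere_normal = const (1/2) * (gen Z3 * gen Z1) + const (1/2) * (gen Z4 * gen Z2)
     + const (1/2) * (gen Z1 * gen Z3) + const (1/2) * (gen Z2 * gen Z4)"
proof -
  have "const 2 * (sphere_normal i * twist \<theta> i (sphere_normal (partner i)))
      = const (1/2) * (gen (partner i) * gen i)" for i
    by (simp only: twist_sphere_normal_partner)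
      (simp add: sphere_normal_def mult.assoc gen_mult_const_mult const_mult_const_mult)
  then show ?thesis
    by (simp add: ginv2_eq_sum_partner UNIV_idx add_ac)
qed

lemma ginv2_sphere_normal_unit:
  "eqB \<theta> {sphere_rel} (ginv2 \<theta> sphere_normal sphere_normal) (const 1)"
proof -
  let ?h = "const (1/2)"
  have halves: "?h * x + ?h * x = x" for x
    by (simp flip: distrib_right const_add)
  have "const 2 * sphere_rel = gen Z1 * gen Z3 + gen Z2 * gen Z4 - 1"
    by (simp add: sphere_rel_def const_mult_const_mult)
  then have identity: "ginv2 \<theta> sphere_normal sphere_normal - const 1
      = ?h * (gen Z3 * gen Z1 - const (Rmat \<theta> Z1 Z3) * (gen Z1 * gen Z3))
        + ?h * (gen Z4 * gen Z2 - const (Rmat \<theta> Z2 Z4) * (gen Z2 * gen Z4))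
        + const 2 * sphere_rel"
    using halves[of "gen Z1 * gen Z3"] halves[of "gen Z2 * gen Z4"]
    by (simp add: ginv2_sphere_normal Rmat_def algebra_simps)
  have "sphere_rel \<in> Jid \<theta> {sphere_rel}"
    by (simp add: Jid_def tsideal_base)
  moreover have "gen i * gen j - const (Rmat \<theta> j i) * (gen j * gen i) \<in> Jid \<theta> {sphere_rel}" for i j
    by (rule tsideal_rels_subset_Jid[OF rel_in_tsideal])
  ultimately show ?thesis
    unfolding eqB_def identity Jid_def by (intro tsideal.add tsideal_mult_left)
qed

theorem proposition4p7:
  fixes \<theta> :: real and f :: fa and \<nu> :: form1
  defines "f \<equiv> fmul (const (1/2))
                  (fmul (gen Z1) (gen Z3) + fmul (gen Z2) (gen Z4) - const 1)"
      and "\<nu> \<equiv> dA \<theta> f"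
  shows "(\<forall>a. eqA \<theta> (fmul a f) (fmul f a))
     \<and> eqOmega \<theta> \<nu> (\<Sum>i\<in>UNIV. \<Sum>j\<in>UNIV. lmul (fmul (const (gmet i j)) (gen i)) (dz j))
     \<and> central_form \<theta> \<nu>
     \<and> eqB \<theta> {f} (ginv2 \<theta> \<nu> \<nu>) (const 1)
     \<and> nc_hypersurface \<theta> {f}
     \<and> N_free_basis \<theta> {f} \<nu>
     \<and> (\<forall>i. eqQ \<theta> {f} (Proj \<theta> \<nu> (dz i)) (dz i - lmul (gen i) \<nu>))"
proof -
  have f: "f = sphere_rel"
    by (simp add: f_def sphere_rel_def)
  then have \<nu>: "\<nu> = sphere_normal"
    by (simp add: \<nu>_def dA_sphere_rel)
  have central: "central_form \<theta> (dA \<theta> sphere_rel)"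
    using sphere_normal_central by (simp add: dA_sphere_rel)
  have twist_closed: "twist \<theta> j sphere_rel \<in> Jid \<theta> {sphere_rel}" for j
    by (simp add: twist_sphere_rel Jid_def tsideal_base)
  have unit: "eqB \<theta> {sphere_rel} (ginv2 \<theta> (dA \<theta> sphere_rel) (dA \<theta> sphere_rel)) (const 1)"
    using ginv2_sphere_normal_unit by (simp add: dA_sphere_rel)
  show ?thesis
    unfolding f \<nu>
    using sphere_rel_central central unit
      N_free_basis_dA[OF central twist_closed unit] nc_hypersurface_dA[OF central twist_closed unit]
    by (simp add: eqA_def dA_sphere_rel metric_sum_eq_sphere_normal eqOmega_def tsideal.zero
        Proj_def ginv2_dz_sphere_normal eqQ_refl)
qed

end
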